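(* Let $z$ be a local holomorphic coordinate near $Q$ with $z(Q)=0$ and metric $h(z,\bar z)dz\,d\bar z$, and expand the smooth function $\Gamma(z,\bar z):=-\frac{h_z}{h}(z,\bar z)$ at $0$ as $$\Gamma=c_0+c_1\bar z+c_2z+c_3z^2+c_4\bar z^2+c_5z\bar z+O(|z|^3).$$ Let $\gamma_1,\gamma_2,\gamma_3\in\mathbb C$ solve $2\gamma_1+c_0=0$, $c_2+2\gamma_1c_0+6\gamma_2=0$, $12\gamma_3+c_3+2\gamma_1c_2+3\gamma_2c_0=0$, and set $w=z+\gamma_1z^2+\gamma_2z^3+\gamma_3z^4$. If $z(t,x)$ solves $i\partial_tz+\partial_x^2z=\Gamma(z,\bar z)(\partial_xz)^2$ with $|z|$ small, then $w(t,x)$ solves $$i\partial_tw+\partial_x^2w=\big(c_1\bar w+\nu_2|w|^2+\nu_3\bar w^2\big)(\partial_xw)^2+O(|w|^3)(\partial_xw)^2,$$ with $\nu_2=c_5-2\gamma_1c_1$, $\nu_3=c_4-c_1\bar\gamma_1$, where $c_1\in\mathbb R$ and $\nu_2=2\overline{\nu_3}$. Here $O(|w|^3)$ denotes a smooth function of $(w,\bar w)$ vanishing to third order at $0$.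
   Context: Subscripts denote Wirtinger derivatives. The equation $i\partial_tz+\partial_x^2z=-\frac{h_z}{h}(\partial_xz)^2$ is the 1D Schrödinger map flow $\partial_tu=J\nabla_x\partial_xu$ written in the holomorphic coordinate $z$ (with $J$ acting as multiplication by $i$). *)

theory Defs
  imports "HOL-Analysis.Analysis"
begin

fun Ck_on :: "nat \<Rightarrow> 'a::real_normed_vector set \<Rightarrow> ('a \<Rightarrow> 'b::real_normed_vector) \<Rightarrow> bool" where
  "Ck_on 0 S f = continuous_on S f"
| "Ck_on (Suc k) S f =
     (continuous_on S f \<and> f differentiable_on S \<and>
      (\<forall>v. Ck_on k S (\<lambda>x. frechet_derivative f (at x) v)))"

definition smooth_on :: "'a::real_normed_vector set \<Rightarrow> ('a \<Rightarrow> 'b::real_normed_vector) \<Rightarrow> bool" where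
  "smooth_on S f \<longleftrightarrow> (\<forall>k. Ck_on k S f)"

definition wirt_z :: "(complex \<Rightarrow> complex) \<Rightarrow> complex \<Rightarrow> complex" where
  "wirt_z f z = (frechet_derivative f (at z) 1 - \<i> * frechet_derivative f (at z) \<i>) / 2"

end

theory Submission
  imports Defs "HOL-Complex_Analysis.Conformal_Mappings"
begin

text \<open>
  Since \<open>h\<close> is real, \<open>Re (\<Gamma> dz) = -d(log h)/2\<close> is exact, so its circulation around every
  small circle vanishes. The circulation of the quadratic jet of \<open>\<Gamma>\<close> around the circle of
  radius \<open>s\<close> centred at \<open>a\<close> is \<open>-2\<pi> s\<^sup>2 Im (c1 + 2 cnj a c4 + a c5)\<close>, while the cubic error
  contributes only \<open>O(s (|a| + s)\<^sup>3)\<close>. Taking \<open>a = 0\<close>, and then \<open>a = s u\<close> with \<open>|u| = 1\<close>, and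
  letting \<open>s \<rightarrow> 0\<close> gives \<open>Im c1 = 0\<close> and \<open>c5 = 2 cnj c4\<close>, i.e. \<open>c1 \<in> \<real>\<close> and \<open>\<nu>2 = 2 cnj \<nu>3\<close>.

  For holomorphic \<open>w = \<phi>(z)\<close> the chain rule turns \<open>\<i> z\<^sub>t + z\<^sub>x\<^sub>x = \<Gamma>(z) z\<^sub>x\<^sup>2\<close> into
  \<open>\<i> w\<^sub>t + w\<^sub>x\<^sub>x = E(z) w\<^sub>x\<^sup>2\<close> with \<open>E = (\<Gamma> \<phi>' + \<phi>'') / \<phi>'\<^sup>2\<close>. For the quartic \<open>\<phi>\<close> the
  \<open>\<gamma>\<close>-equations make \<open>E(z) - (c1 cnj w + \<nu>2 |w|\<^sup>2 + \<nu>3 cnj w\<^sup>2)\<close> vanish to third order,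
  and composing with the local holomorphic inverse of \<open>\<phi>\<close> (which exists as \<open>\<phi>'(0) = 1\<close>)
  turns it into a smooth remainder \<open>R(w) = O(|w|\<^sup>3)\<close>.
\<close>

section \<open>\<open>C\<^sup>k\<close> calculus\<close>

lemma Ck_on_Suc_imp: "Ck_on (Suc k) S f \<Longrightarrow> Ck_on k S f"
  by (induction k arbitrary: f) auto

lemma Ck_on_subset: "Ck_on k S f \<Longrightarrow> T \<subseteq> S \<Longrightarrow> Ck_on k T f"
  by (induction k arbitrary: f) (auto intro: continuous_on_subset differentiable_on_subset)

lemma smooth_onD: "smooth_on S f \<Longrightarrow> Ck_on k S f"
  unfolding smooth_on_def by blast

lemma smooth_on_imp_differentiable_at:
  assumes "open S" "smooth_on S f" "x \<in> S"
  shows "f differentiable at x"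
  using smooth_onD[OF assms(2), of 1] assms(1,3) differentiable_on_eq_differentiable_at by auto

lemma Ck_on_has_derivative:
  assumes "Ck_on (Suc k) S f" "open S" "x \<in> S"
  shows "(f has_derivative frechet_derivative f (at x)) (at x)"
proof -
  have "f differentiable at x"
    using assms differentiable_on_eq_differentiable_at by auto
  then show ?thesis
    using frechet_derivative_works by blast
qed

lemma Ck_on_cong:
  assumes "open S" "\<And>x. x \<in> S \<Longrightarrow> f x = g x" "Ck_on k S f"
  shows "Ck_on k S g"
  using assms(2,3)
proof (induction k arbitrary: f g)
  case 0
  then show ?case using continuous_on_cong by force
next
  case (Suc k)
  have f': "(f has_derivative frechet_derivative f (at x)) (at x)" if "x \<in> S" for x
    using Ck_on_has_derivative[OF Suc.prems(2) assms(1) that] .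
  have g': "(g has_derivative frechet_derivative f (at x)) (at x)" if "x \<in> S" for x
    using has_derivative_transform_within_open[OF f'[OF that] assms(1) that] Suc.prems(1) by blast
  have "Ck_on k S (\<lambda>x. frechet_derivative g (at x) v)" for v
  proof (rule Suc.IH[of "\<lambda>x. frechet_derivative f (at x) v"])
    show "frechet_derivative f (at x) v = frechet_derivative g (at x) v" if "x \<in> S" for x
      using frechet_derivative_at[OF g'[OF that]] by simp
  qed (use Suc.prems in auto)
  moreover have "continuous_on S g"
    using Suc continuous_on_cong by force
  moreover have "g differentiable_on S"
    using g' assms(1) differentiable_on_eq_differentiable_at differentiableI by blast
  ultimately show ?case by simp
qed

lemma Ck_on_SucI:
  assumes "open S" "\<And>x. x \<in> S \<Longrightarrow> (f has_derivative F' x) (at x)"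
    "\<And>v. Ck_on k S (\<lambda>x. F' x v)"
  shows "Ck_on (Suc k) S f"
proof -
  have "Ck_on k S (\<lambda>x. frechet_derivative f (at x) v)" for v
    by (rule Ck_on_cong[OF assms(1) _ assms(3)[of v]]) (metis assms(2) frechet_derivative_at)
  moreover have "continuous_on S f"
    using assms(2) has_derivative_continuous continuous_at_imp_continuous_on by blast
  moreover have "f differentiable_on S"
    using assms(1,2) differentiable_on_eq_differentiable_at differentiableI by blast
  ultimately show ?thesis by simp
qed

lemma Ck_on_const: "Ck_on k S (\<lambda>x. c)"
  by (induction k arbitrary: c) auto

lemma Ck_on_ident: "open S \<Longrightarrow> Ck_on k S (\<lambda>x. x)"
  by (cases k) (auto intro!: Ck_on_SucI[where F'="\<lambda>x v. v"] Ck_on_const)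

lemma Ck_on_bounded_linear:
  assumes "open S" "bounded_linear L" "Ck_on k S f"
  shows "Ck_on k S (\<lambda>x. L (f x))"
  using assms(3)
proof (induction k arbitrary: f)
  case 0
  then show ?case
    using assms(2) linear_continuous_on continuous_on_compose[of S f L] by (auto simp: o_def)
next
  case (Suc k)
  show ?case
  proof (rule Ck_on_SucI[OF assms(1), where F'="\<lambda>x v. L (frechet_derivative f (at x) v)"])
    show "((\<lambda>x. L (f x)) has_derivative (\<lambda>v. L (frechet_derivative f (at x) v))) (at x)"
      if "x \<in> S" for x
      using Ck_on_has_derivative[OF Suc.prems assms(1) that]
        bounded_linear.has_derivative[OF assms(2)] by blast
  qed (use Suc in auto)
qed

lemma Ck_on_add:
  assumes "open S" "Ck_on k S f" "Ck_on k S g"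
  shows "Ck_on k S (\<lambda>x. f x + g x)"
  using assms(2,3)
proof (induction k arbitrary: f g)
  case 0
  then show ?case by (auto intro: continuous_on_add)
next
  case (Suc k)
  show ?case
  proof (rule Ck_on_SucI[OF assms(1),
        where F'="\<lambda>x v. frechet_derivative f (at x) v + frechet_derivative g (at x) v"])
    show "((\<lambda>x. f x + g x) has_derivative
        (\<lambda>v. frechet_derivative f (at x) v + frechet_derivative g (at x) v)) (at x)"
      if "x \<in> S" for x
      using Ck_on_has_derivative[OF Suc.prems(1) assms(1) that]
        Ck_on_has_derivative[OF Suc.prems(2) assms(1) that]
      by (intro has_derivative_add)
  qed (use Suc in auto)
qed

lemma Ck_on_bounded_bilinear:
  assumes "open S" "bounded_bilinear pr" "Ck_on k S f" "Ck_on k S g"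
  shows "Ck_on k S (\<lambda>x. pr (f x) (g x))"
  using assms(3,4)
proof (induction k arbitrary: f g)
  case 0
  then show ?case using bounded_bilinear.continuous_on[OF assms(2)] by auto
next
  case (Suc k)
  let ?F' = "\<lambda>x v. pr (f x) (frechet_derivative g (at x) v) + pr (frechet_derivative f (at x) v) (g x)"
  show ?case
  proof (rule Ck_on_SucI[OF assms(1), where F'="?F'"])
    show "((\<lambda>x. pr (f x) (g x)) has_derivative ?F' x) (at x)" if "x \<in> S" for x
      using Ck_on_has_derivative[OF Suc.prems(1) assms(1) that]
        Ck_on_has_derivative[OF Suc.prems(2) assms(1) that]
        bounded_bilinear.FDERIV[OF assms(2)] by blast
    have "Ck_on k S f" "Ck_on k S g"
      using Suc.prems Ck_on_Suc_imp by blast+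
    then show "Ck_on k S (\<lambda>x. ?F' x v)" for v
      using Suc by (intro Ck_on_add[OF assms(1)]) auto
  qed
qed

lemma Ck_on_mult:
  fixes f g :: "'a::real_normed_vector \<Rightarrow> 'b::real_normed_algebra"
  shows "open S \<Longrightarrow> Ck_on k S f \<Longrightarrow> Ck_on k S g \<Longrightarrow> Ck_on k S (\<lambda>x. f x * g x)"
  using Ck_on_bounded_bilinear[OF _ bounded_bilinear_mult] .

lemma Ck_on_scaleR:
  "open S \<Longrightarrow> Ck_on k S f \<Longrightarrow> Ck_on k S g \<Longrightarrow> Ck_on k S (\<lambda>x. f x *\<^sub>R g x)"
  using Ck_on_bounded_bilinear[OF _ bounded_bilinear_scaleR] .

lemma Ck_on_minus: "open S \<Longrightarrow> Ck_on k S f \<Longrightarrow> Ck_on k S (\<lambda>x. - f x)"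
  using Ck_on_bounded_linear[OF _ bounded_linear_minus[OF bounded_linear_ident]] .

lemma Ck_on_diff:
  "open S \<Longrightarrow> Ck_on k S f \<Longrightarrow> Ck_on k S g \<Longrightarrow> Ck_on k S (\<lambda>x. f x - g x)"
  using Ck_on_add[OF _ _ Ck_on_minus] by fastforce

lemma Ck_on_power:
  fixes f :: "'a::real_normed_vector \<Rightarrow> 'b::real_normed_algebra_1"
  shows "open S \<Longrightarrow> Ck_on k S f \<Longrightarrow> Ck_on k S (\<lambda>x. f x ^ n)"
  by (induction n) (auto intro: Ck_on_const Ck_on_mult)

lemma Ck_on_cnj: "open S \<Longrightarrow> Ck_on k S cnj"
  using Ck_on_bounded_linear[OF _ bounded_linear_cnj Ck_on_ident] by simp

lemma Ck_on_inverse: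
  fixes f :: "'a::real_normed_vector \<Rightarrow> 'b::real_normed_field"
  assumes "open S" "Ck_on k S f" "\<And>x. x \<in> S \<Longrightarrow> f x \<noteq> 0"
  shows "Ck_on k S (\<lambda>x. inverse (f x))"
  using assms(2)
proof (induction k)
  case 0
  then show ?case using assms(3) by (auto intro!: continuous_on_inverse)
next
  case (Suc k)
  let ?F' = "\<lambda>x v. - (inverse (f x) * frechet_derivative f (at x) v * inverse (f x))"
  show ?case
  proof (rule Ck_on_SucI[OF assms(1), where F'="?F'"])
    show "((\<lambda>x. inverse (f x)) has_derivative ?F' x) (at x)" if "x \<in> S" for x
      using Ck_on_has_derivative[OF Suc.prems assms(1) that] assms(3)[OF that]
      by (intro Deriv.has_derivative_inverse)
    show "Ck_on k S (\<lambda>x. ?F' x v)" for v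
      using Suc Ck_on_Suc_imp by (intro Ck_on_minus Ck_on_mult assms(1)) auto
  qed
qed

lemma linear_complex_decomp:
  fixes L :: "complex \<Rightarrow> 'b::real_normed_vector"
  assumes "linear L"
  shows "L u = Re u *\<^sub>R L 1 + Im u *\<^sub>R L \<i>"
proof -
  have "u = Re u *\<^sub>R 1 + Im u *\<^sub>R \<i>"
    by (simp add: complex_eq_iff)
  then have "L u = L (Re u *\<^sub>R 1 + Im u *\<^sub>R \<i>)"
    by simp
  then show ?thesis
    using assms by (simp add: linear_add linear_scale)
qed

lemma Ck_on_compose:
  fixes f :: "complex \<Rightarrow> 'b::real_normed_vector" and g :: "'a::real_normed_vector \<Rightarrow> complex"
  assumes "open S" "open T" "g ` S \<subseteq> T" "Ck_on k T f" "Ck_on k S g"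
  shows "Ck_on k S (\<lambda>x. f (g x))"
  using assms(4,5)
proof (induction k arbitrary: f)
  case 0
  then show ?case using continuous_on_compose2[OF _ _ assms(3)] by simp
next
  case (Suc k)
  \<comment> \<open>Expanding \<open>Df\<close> in the real basis \<open>1, \<i>\<close> keeps all dependence on \<open>x\<close> inside \<open>C\<^sup>k\<close> functions.\<close>
  let ?F' = "\<lambda>x v. Re (frechet_derivative g (at x) v) *\<^sub>R frechet_derivative f (at (g x)) 1
       + Im (frechet_derivative g (at x) v) *\<^sub>R frechet_derivative f (at (g x)) \<i>"
  show ?case
  proof (rule Ck_on_SucI[OF assms(1), where F'="?F'"])
    fix x assume x: "x \<in> S"
    have dg: "(g has_derivative frechet_derivative g (at x)) (at x)"
      using Ck_on_has_derivative[OF Suc.prems(2) assms(1) x] .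
    have df: "(f has_derivative frechet_derivative f (at (g x))) (at (g x))"
      using Ck_on_has_derivative[OF Suc.prems(1) assms(2)] x assms(3) by auto
    show "((\<lambda>x. f (g x)) has_derivative ?F' x) (at x)"
      using diff_chain_at[OF dg df] unfolding o_def
      by (rule has_derivative_eq_rhs)
        (rule ext, rule linear_complex_decomp[OF has_derivative_linear[OF df]])
  next
    fix v
    have gk: "Ck_on k S g"
      using Suc.prems Ck_on_Suc_imp by blast
    have "Ck_on k S (\<lambda>x. frechet_derivative f (at (g x)) u)" for u
      using Suc.IH[OF _ gk, of "\<lambda>y. frechet_derivative f (at y) u"] Suc.prems by auto
    moreover have "Ck_on k S (\<lambda>x. Re (frechet_derivative g (at x) v))"
      using Suc.prems by (intro Ck_on_bounded_linear[OF assms(1) bounded_linear_Re]) simp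
    moreover have "Ck_on k S (\<lambda>x. Im (frechet_derivative g (at x) v))"
      using Suc.prems by (intro Ck_on_bounded_linear[OF assms(1) bounded_linear_Im]) simp
    ultimately show "Ck_on k S (\<lambda>x. ?F' x v)"
      by (intro Ck_on_add Ck_on_scaleR assms(1))
  qed
qed

lemma Ck_on_deriv_comp:
  fixes \<psi> g :: "complex \<Rightarrow> complex"
  assumes "open B" "open T" "\<psi> ` B \<subseteq> T" "Ck_on k T g"
    "\<And>w. w \<in> B \<Longrightarrow> (\<psi> has_field_derivative g (\<psi> w)) (at w)"
  shows "Ck_on k B \<psi>"
  using assms(4)
proof (induction k)
  case 0
  have "isCont \<psi> w" if "w \<in> B" for w
    using assms(5)[OF that] DERIV_isCont by blast
  then show ?case
    by (simp add: continuous_at_imp_continuous_on)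
next
  case (Suc k)
  show ?case
  proof (rule Ck_on_SucI[OF assms(1), where F'="\<lambda>w v. g (\<psi> w) * v"])
    show "(\<psi> has_derivative (*) (g (\<psi> w))) (at w)" if "w \<in> B" for w
      using assms(5)[OF that] has_field_derivative_def by blast
    have "Ck_on k T g"
      using Suc.prems Ck_on_Suc_imp by blast
    then have "Ck_on k B (\<lambda>w. g (\<psi> w))"
      using Ck_on_compose[OF assms(1-3)] Suc.IH by blast
    then show "Ck_on k B (\<lambda>w. g (\<psi> w) * v)" for v
      by (intro Ck_on_mult assms(1) Ck_on_const)
  qed
qed

section \<open>The Christoffel symbol and its circulation\<close>

definition christoffel :: "(complex \<Rightarrow> real) \<Rightarrow> complex \<Rightarrow> complex" where
  "christoffel h z = - wirt_z (\<lambda>u. complex_of_real (h u)) z / complex_of_real (h z)"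

lemma christoffel_eq:
  assumes "h differentiable at z"
  shows "christoffel h z = - (of_real (frechet_derivative h (at z) 1)
      - \<i> * of_real (frechet_derivative h (at z) \<i>)) * inverse (2 * complex_of_real (h z))"
proof -
  have "((\<lambda>u. complex_of_real (h u)) has_derivative
      (\<lambda>v. of_real (frechet_derivative h (at z) v))) (at z)"
    using assms unfolding frechet_derivative_works by (rule has_derivative_of_real)
  then have D: "frechet_derivative (\<lambda>u. complex_of_real (h u)) (at z) v
      = of_real (frechet_derivative h (at z) v)" for v
    by (simp add: frechet_derivative_at[symmetric])
  have "- (x / 2) / y = - x * inverse (2 * y)" for x y :: complex
    by (simp add: field_simps)
  then show ?thesis
    unfolding christoffel_def wirt_z_def D .
qed

lemma Ck_on_christoffel:
  assumes "open S" "\<And>z. z \<in> S \<Longrightarrow> h z > 0" "Ck_on (Suc k) S h"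
  shows "Ck_on k S (christoffel h)"
proof (rule Ck_on_cong[OF assms(1)])
  show "- (of_real (frechet_derivative h (at z) 1)
      - \<i> * of_real (frechet_derivative h (at z) \<i>)) * inverse (2 * complex_of_real (h z))
      = christoffel h z"
    if "z \<in> S" for z
    using assms(1,3) that differentiable_on_eq_differentiable_at
    by (subst christoffel_eq) auto
  have Dh: "Ck_on k S (\<lambda>z. complex_of_real (frechet_derivative h (at z) v))" for v
    using assms(3) by (intro Ck_on_bounded_linear[OF assms(1) bounded_linear_of_real]) simp
  have "Ck_on k S (\<lambda>z. 2 * complex_of_real (h z))"
    using Ck_on_Suc_imp[OF assms(3)]
    by (intro Ck_on_mult[OF assms(1)] Ck_on_const Ck_on_bounded_linear[OF assms(1) bounded_linear_of_real])
  moreover have "2 * complex_of_real (h z) \<noteq> 0" if "z \<in> S" for z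
    using assms(2)[OF that] by simp
  ultimately have "Ck_on k S (\<lambda>z. inverse (2 * complex_of_real (h z)))"
    by (intro Ck_on_inverse[OF assms(1)])
  then show "Ck_on k S (\<lambda>z. - (of_real (frechet_derivative h (at z) 1)
      - \<i> * of_real (frechet_derivative h (at z) \<i>)) * inverse (2 * complex_of_real (h z)))"
    using Dh by (intro Ck_on_mult Ck_on_minus Ck_on_diff Ck_on_const assms(1))
qed

text \<open>The real part of \<open>\<Gamma> dz\<close> is the exact form \<open>-d(log h)/2\<close>.\<close>

lemma Re_christoffel_mult:
  fixes h :: "complex \<Rightarrow> real"
  assumes "h differentiable at z" "h z > 0"
  shows "Re (christoffel h z * u) = - frechet_derivative h (at z) u / (2 * h z)"
proof -
  have "Re (- (complex_of_real a - \<i> * complex_of_real b) * inverse (2 * complex_of_real (h z)) * u)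
      = - (Re u * a + Im u * b) / (2 * h z)" for a b
    using assms(2) by (simp add: field_simps)
  moreover have "Re u * frechet_derivative h (at z) 1 + Im u * frechet_derivative h (at z) \<i>
      = frechet_derivative h (at z) u"
    using linear_complex_decomp[OF linear_frechet_derivative[OF assms(1)], of u] by simp
  ultimately show ?thesis
    unfolding christoffel_eq[OF assms(1)] by metis
qed

lemma has_vector_derivative_circle:
  "((\<lambda>t. a + complex_of_real s * exp (\<i> * complex_of_real t)) has_vector_derivative
      (\<i> * complex_of_real s * exp (\<i> * complex_of_real t))) (at t)"
proof -
  have "((\<lambda>w. a + complex_of_real s * exp (\<i> * w)) has_field_derivative
      \<i> * complex_of_real s * exp (\<i> * complex_of_real t)) (at (complex_of_real t))"
    by (auto intro!: derivative_eq_intros)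
  then show ?thesis
    using field_vector_diff_chain_at[OF has_vector_derivative_of_real[OF DERIV_ident]]
    by (simp add: o_def)
qed

lemma circle_integral_Re_christoffel:
  fixes h :: "complex \<Rightarrow> real" and a :: complex and s :: real
  assumes "s \<ge> 0" "\<And>z. z \<in> cball a s \<Longrightarrow> h z > 0 \<and> h differentiable at z"
  shows "((\<lambda>t. Re (christoffel h (a + of_real s * exp (\<i> * of_real t))
      * (\<i> * of_real s * exp (\<i> * of_real t)))) has_integral 0) {0..2*pi}"
proof -
  let ?z = "\<lambda>t. a + complex_of_real s * exp (\<i> * complex_of_real t)"
  let ?v = "\<lambda>t. \<i> * complex_of_real s * exp (\<i> * complex_of_real t)"
  let ?f = "\<lambda>t. - ln (h (?z t)) / 2"
  have "(?f has_real_derivative Re (christoffel h (?z t) * ?v t)) (at t)" for t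
  proof -
    have "?z t \<in> cball a s"
      using assms(1) by (simp add: dist_norm norm_mult)
    then have hz: "h (?z t) > 0" and dh: "h differentiable at (?z t)"
      using assms(2) by auto
    have "((\<lambda>t. h (?z t)) has_derivative (\<lambda>x. frechet_derivative h (at (?z t)) (x *\<^sub>R ?v t))) (at t)"
      using diff_chain_at[OF has_vector_derivative_circle[unfolded has_vector_derivative_def]
          dh[unfolded frechet_derivative_works]]
      by (simp add: o_def)
    moreover have "(\<lambda>x. frechet_derivative h (at (?z t)) (x *\<^sub>R ?v t))
        = (\<lambda>x. frechet_derivative h (at (?z t)) (?v t) * x)"
      by (rule ext) (simp add: linear_scale[OF linear_frechet_derivative[OF dh]])
    ultimately have "((\<lambda>t. h (?z t)) has_real_derivative frechet_derivative h (at (?z t)) (?v t)) (at t)"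
      unfolding has_field_derivative_def by simp
    from DERIV_cdivide[OF DERIV_chain2[OF DERIV_ln[OF hz] this], of "- 2"]
    show ?thesis
      unfolding Re_christoffel_mult[OF dh hz] using hz by (simp add: field_simps)
  qed
  then have I: "((\<lambda>t. Re (christoffel h (?z t) * ?v t)) has_integral (?f (2*pi) - ?f 0)) {0..2*pi}"
    by (intro fundamental_theorem_of_calculus)
      (auto simp: has_real_derivative_iff_has_vector_derivative intro: has_vector_derivative_at_within)
  have "?z (2*pi) = ?z 0"
    using exp_two_pi_i by (simp add: mult.commute mult.left_commute)
  then have "?f (2*pi) - ?f 0 = 0"
    by (simp only:)
  then show ?thesis
    using I by (simp only:)
qed

definition jet2 :: "complex \<Rightarrow> complex \<Rightarrow> complex \<Rightarrow> complex \<Rightarrow> complex \<Rightarrow> complex \<Rightarrow> complex \<Rightarrow> complex"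
  where "jet2 c0 c1 c2 c3 c4 c5 z = c0 + c1 * cnj z + c2 * z + c3 * z^2 + c4 * (cnj z)^2 + c5 * z * cnj z"

lemma circle_integral_Re_jet2:
  fixes a c0 c1 c2 c3 c4 c5 :: complex and s :: real
  shows "((\<lambda>t. Re (jet2 c0 c1 c2 c3 c4 c5 (a + of_real s * exp (\<i> * of_real t))
      * (\<i> * of_real s * exp (\<i> * of_real t))))
    has_integral - (2 * pi * s^2 * Im (c1 + 2 * cnj a * c4 + a * c5))) {0..2*pi}"
proof -
  let ?s = "complex_of_real s"
  let ?X = "c1 + 2 * cnj a * c4 + a * c5"
  let ?A = "c0 + c1 * cnj a + c2 * a + c3 * a^2 + c4 * (cnj a)^2 + c5 * (a * cnj a + ?s^2)"
  let ?B = "c2 + 2 * a * c3 + c5 * cnj a"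
  \<comment> \<open>On the circle \<open>cnj z = cnj a + s\<^sup>2 / (z - a)\<close>, so the integrand is a Laurent polynomial
      in \<open>e\<^sup>i\<^sup>t\<close>; only its constant term \<open>\<i> s\<^sup>2 X\<close> contributes.\<close>
  define G where "G \<tau> = \<i> * ?s^2 * ?X * \<tau> + ?s * ?A * exp (\<i> * \<tau>) + ?s^2 * ?B * exp (\<i> * \<tau>)^2 / 2
      + ?s^3 * c3 * exp (\<i> * \<tau>)^3 / 3 - ?s^3 * c4 * exp (- (\<i> * \<tau>))" for \<tau>
  let ?g = "\<lambda>\<tau>. \<i> * ?s^2 * ?X + \<i> * ?s * ?A * exp (\<i> * \<tau>)
      + \<i> * ?s^2 * ?B * exp (\<i> * \<tau>)^2 + \<i> * ?s^3 * c3 * exp (\<i> * \<tau>)^3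
      + \<i> * ?s^3 * c4 * exp (- (\<i> * \<tau>))"
  have G': "(G has_field_derivative ?g \<tau>) (at \<tau>)" for \<tau>
    unfolding G_def[abs_def]
    by (auto intro!: derivative_eq_intros simp: algebra_simps power2_eq_square power3_eq_cube)
  have g: "?g (of_real t) = jet2 c0 c1 c2 c3 c4 c5 (a + ?s * exp (\<i> * of_real t)) * (\<i> * ?s * exp (\<i> * of_real t))"
    for t
  proof -
    have "\<i> * ?s^2 * ?X + \<i> * ?s * ?A * E + \<i> * ?s^2 * ?B * E^2 + \<i> * ?s^3 * c3 * E^3
        + \<i> * ?s^3 * c4 * Eb
      = jet2 c0 c1 c2 c3 c4 c5 (a + ?s * E) * (\<i> * ?s * E)"
      if "E * Eb = 1" "cnj (a + ?s * E) = cnj a + ?s * Eb" for E Eb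
      using that unfolding jet2_def by algebra
    moreover have "cnj (a + ?s * exp (\<i> * of_real t)) = cnj a + ?s * exp (- (\<i> * of_real t))"
      by (simp add: exp_cnj)
    ultimately show ?thesis
      by (simp add: exp_minus)
  qed
  have "((\<lambda>t. G (of_real t)) has_vector_derivative ?g (of_real t)) (at t)" for t
    using field_vector_diff_chain_at[OF has_vector_derivative_of_real[OF DERIV_ident] G']
    by (simp add: o_def)
  then have I: "((\<lambda>t. jet2 c0 c1 c2 c3 c4 c5 (a + ?s * exp (\<i> * of_real t)) * (\<i> * ?s * exp (\<i> * of_real t)))
      has_integral (G (of_real (2*pi)) - G (of_real 0))) {0..2*pi}"
    unfolding g by (intro fundamental_theorem_of_calculus) (auto intro: has_vector_derivative_at_within)
  have G_ends: "G (of_real (2*pi)) - G (of_real 0) = \<i> * ?s^2 * ?X * (2 * of_real pi)"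
  proof -
    have e: "exp (\<i> * complex_of_real (2*pi)) = 1"
      using exp_two_pi_i by (simp add: mult.commute mult.left_commute)
    then have e': "exp (- (\<i> * complex_of_real (2*pi))) = 1"
      by (simp add: exp_minus)
    show ?thesis
      unfolding G_def e e' by (simp add: algebra_simps)
  qed
  have "Re (\<i> * ?s^2 * ?X * (2 * of_real pi)) = - (2 * pi * s^2 * Im ?X)"
    by simp
  then show ?thesis
    using has_integral_Re[OF I[unfolded G_ends]] by (simp only:)
qed

lemma circle_jet2_Im_bound:
  fixes h :: "complex \<Rightarrow> real" and a c0 c1 c2 c3 c4 c5 :: complex and s C :: real
  assumes "s > 0" "C \<ge> 0"
    "\<And>z. z \<in> cball a s \<Longrightarrow> h z > 0 \<and> h differentiable at z \<and>
        cmod (christoffel h z - jet2 c0 c1 c2 c3 c4 c5 z) \<le> C * cmod z ^ 3"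
  shows "s * \<bar>Im (c1 + 2 * cnj a * c4 + a * c5)\<bar> \<le> C * (cmod a + s)^3"
proof -
  let ?z = "\<lambda>t. a + complex_of_real s * exp (\<i> * complex_of_real t)"
  let ?v = "\<lambda>t. \<i> * complex_of_real s * exp (\<i> * complex_of_real t)"
  define y where "y = Im (c1 + 2 * cnj a * c4 + a * c5)"
  have z: "?z t \<in> cball a s" "cmod (?z t) \<le> cmod a + s" for t
    using assms(1) norm_triangle_ineq[of a "of_real s * exp (\<i> * of_real t)"]
    by (auto simp: dist_norm norm_mult)
  have "((\<lambda>t. Re (christoffel h (?z t) * ?v t)) has_integral 0) {0..2*pi}"
    using assms by (intro circle_integral_Re_christoffel) auto
  from has_integral_diff[OF this circle_integral_Re_jet2[of c0 c1 c2 c3 c4 c5 a s]]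
  have I: "((\<lambda>t. Re ((christoffel h (?z t) - jet2 c0 c1 c2 c3 c4 c5 (?z t)) * ?v t))
      has_integral (0 - - (2 * pi * s^2 * y))) {0..2*pi}"
    unfolding y_def by (simp add: algebra_simps)
  have B: "norm (Re ((christoffel h (?z t) - jet2 c0 c1 c2 c3 c4 c5 (?z t)) * ?v t))
      \<le> C * (cmod a + s)^3 * s" for t
  proof -
    have "norm (Re ((christoffel h (?z t) - jet2 c0 c1 c2 c3 c4 c5 (?z t)) * ?v t))
        \<le> cmod ((christoffel h (?z t) - jet2 c0 c1 c2 c3 c4 c5 (?z t)) * ?v t)"
      unfolding real_norm_def by (rule abs_Re_le_cmod)
    also have "\<dots> = cmod (christoffel h (?z t) - jet2 c0 c1 c2 c3 c4 c5 (?z t)) * s"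
      using assms(1) by (simp add: norm_mult)
    also have "\<dots> \<le> C * cmod (?z t) ^ 3 * s"
      using assms z by (intro mult_right_mono) auto
    also have "\<dots> \<le> C * (cmod a + s)^3 * s"
      using z(2) assms(1,2) by (intro mult_right_mono mult_left_mono power_mono) auto
    finally show ?thesis .
  qed
  have "norm (0 - - (2 * pi * s^2 * y)) \<le> C * (cmod a + s)^3 * s * Henstock_Kurzweil_Integration.content (cbox 0 (2*pi))"
    using assms(1,2) B by (intro has_integral_bound[OF _ I[unfolded cbox_interval[symmetric]]]) auto
  then have "s * (s * \<bar>y\<bar>) * (2 * pi) \<le> s * (C * (cmod a + s)^3) * (2 * pi)"
    by (simp add: abs_mult power2_eq_square mult_ac)
  then show ?thesis
    using assms(1) unfolding y_def by simp
qed

lemma abs_le_mult_imp_zero: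
  fixes x K e :: real
  assumes "e > 0" "\<And>t. 0 < t \<Longrightarrow> t < e \<Longrightarrow> \<bar>x\<bar> \<le> K * t"
  shows "x = 0"
proof -
  have "\<bar>x\<bar> \<le> 0"
  proof (rule tendsto_le[OF _ _ tendsto_const])
    show "((\<lambda>t. K * t) \<longlongrightarrow> 0) (at_right 0)"
      by (auto intro!: tendsto_eq_intros)
    show "\<forall>\<^sub>F t in at_right 0. \<bar>x\<bar> \<le> K * t"
      using assms by (auto simp: eventually_at_right_field intro!: exI[of _ e])
  qed simp
  then show ?thesis
    by simp
qed

lemma christoffel_jet2_coefficients:
  fixes h :: "complex \<Rightarrow> real" and c0 c1 c2 c3 c4 c5 :: complex and C \<epsilon> :: real
  assumes "\<epsilon> > 0" "C \<ge> 0"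
    "\<And>z. cmod z < \<epsilon> \<Longrightarrow> h z > 0 \<and> h differentiable at z \<and>
        cmod (christoffel h z - jet2 c0 c1 c2 c3 c4 c5 z) \<le> C * cmod z ^ 3"
  shows "Im c1 = 0" "c5 = 2 * cnj c4"
proof -
  have bound: "s * \<bar>Im (c1 + 2 * cnj a * c4 + a * c5)\<bar> \<le> C * (cmod a + s)^3"
    if "s > 0" "cmod a + s < \<epsilon>" for a s
  proof (rule circle_jet2_Im_bound[OF that(1) assms(2)])
    fix z assume "z \<in> cball a s"
    then have "cmod z \<le> cmod a + s"
      using norm_triangle_ineq[of a "z - a"] by (simp add: dist_norm norm_minus_commute)
    then show "h z > 0 \<and> h differentiable at z \<and>
        cmod (christoffel h z - jet2 c0 c1 c2 c3 c4 c5 z) \<le> C * cmod z ^ 3"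
      using that(2) assms(3) by simp
  qed
  show c1: "Im c1 = 0"
  proof (rule abs_le_mult_imp_zero[of "min \<epsilon> 1" _ C])
    fix t :: real assume t: "0 < t" "t < min \<epsilon> 1"
    then have "t * \<bar>Im c1\<bar> \<le> t * (C * t^2)"
      using bound[of t 0] by (simp add: power3_eq_cube power2_eq_square mult_ac)
    then have "\<bar>Im c1\<bar> \<le> C * t^2"
      using t by simp
    also have "\<dots> \<le> C * t"
      using t assms(2) by (intro mult_left_mono) (auto simp: power2_eq_square)
    finally show "\<bar>Im c1\<bar> \<le> C * t" .
  qed (use assms(1) in simp)
  have "Im (2 * cnj u * c4 + u * c5) = 0" if u: "cmod u = 1" for u
  proof (rule abs_le_mult_imp_zero[of "\<epsilon>/2" _ "8 * C"])
    fix t :: real assume t: "0 < t" "t < \<epsilon>/2"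
    have "Im (c1 + 2 * cnj (of_real t * u) * c4 + (of_real t * u) * c5) = t * Im (2 * cnj u * c4 + u * c5)"
      using c1 by (simp add: algebra_simps)
    moreover have "cmod (of_real t * u) + t = 2 * t"
      using u t by (simp add: norm_mult)
    ultimately have "t^3 * \<bar>Im (2 * cnj u * c4 + u * c5)\<bar> \<le> t^3 * (8 * C * t)"
      using bound[of t "of_real t * u"] t
      by (simp add: abs_mult power3_eq_cube power2_eq_square mult_ac)
    then show "\<bar>Im (2 * cnj u * c4 + u * c5)\<bar> \<le> 8 * C * t"
      using t by simp
  qed (use assms(1) in simp)
  from this[of 1] this[of \<i>] show "c5 = 2 * cnj c4"
    by (simp add: complex_eq_iff)
qed

section \<open>The quartic change of coordinates\<close>

definition quartic :: "complex \<Rightarrow> complex \<Rightarrow> complex \<Rightarrow> complex \<Rightarrow> complex" where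
  "quartic \<gamma>1 \<gamma>2 \<gamma>3 z = z + \<gamma>1 * z^2 + \<gamma>2 * z^3 + \<gamma>3 * z^4"

definition quartic_deriv :: "complex \<Rightarrow> complex \<Rightarrow> complex \<Rightarrow> complex \<Rightarrow> complex" where
  "quartic_deriv \<gamma>1 \<gamma>2 \<gamma>3 z = 1 + 2 * \<gamma>1 * z + 3 * \<gamma>2 * z^2 + 4 * \<gamma>3 * z^3"

definition quartic_deriv2 :: "complex \<Rightarrow> complex \<Rightarrow> complex \<Rightarrow> complex \<Rightarrow> complex" where
  "quartic_deriv2 \<gamma>1 \<gamma>2 \<gamma>3 z = 2 * \<gamma>1 + 6 * \<gamma>2 * z + 12 * \<gamma>3 * z^2"

definition quartic_slope :: "complex \<Rightarrow> complex \<Rightarrow> complex \<Rightarrow> complex \<Rightarrow> complex \<Rightarrow> complex" where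
  "quartic_slope \<gamma>1 \<gamma>2 \<gamma>3 a b =
     1 + \<gamma>1 * (a + b) + \<gamma>2 * (a^2 + a * b + b^2) + \<gamma>3 * (a^3 + a^2 * b + a * b^2 + b^3)"

lemma has_field_derivative_quartic:
  "(quartic \<gamma>1 \<gamma>2 \<gamma>3 has_field_derivative quartic_deriv \<gamma>1 \<gamma>2 \<gamma>3 z) (at z)"
  unfolding quartic_def[abs_def] quartic_deriv_def
  by (auto intro!: derivative_eq_intros simp: algebra_simps)

lemma has_field_derivative_quartic_deriv:
  "(quartic_deriv \<gamma>1 \<gamma>2 \<gamma>3 has_field_derivative quartic_deriv2 \<gamma>1 \<gamma>2 \<gamma>3 z) (at z)"
  unfolding quartic_deriv_def[abs_def] quartic_deriv2_def
  by (auto intro!: derivative_eq_intros simp: algebra_simps)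

lemma quartic_diff: "quartic \<gamma>1 \<gamma>2 \<gamma>3 a - quartic \<gamma>1 \<gamma>2 \<gamma>3 b = (a - b) * quartic_slope \<gamma>1 \<gamma>2 \<gamma>3 a b"
  unfolding quartic_def quartic_slope_def by algebra

lemma quartic_deriv_eq_slope: "quartic_deriv \<gamma>1 \<gamma>2 \<gamma>3 z = quartic_slope \<gamma>1 \<gamma>2 \<gamma>3 z z"
  unfolding quartic_deriv_def quartic_slope_def by algebra

lemma quartic_slope_near_1:
  obtains r where "r > 0"
    "\<And>a b. cmod a < r \<Longrightarrow> cmod b < r \<Longrightarrow> cmod (quartic_slope \<gamma>1 \<gamma>2 \<gamma>3 a b - 1) < 1/2"
proof -
  let ?F = "\<lambda>p. quartic_slope \<gamma>1 \<gamma>2 \<gamma>3 (fst p) (snd p)"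
  have "continuous (at (0, 0)) ?F"
    unfolding quartic_slope_def by (intro continuous_intros)
  moreover have "?F (0, 0) = 1"
    by (simp add: quartic_slope_def)
  ultimately obtain d where d: "d > 0" "\<And>p. dist p (0, 0) < d \<Longrightarrow> dist (?F p) 1 < 1/2"
    unfolding continuous_at_eps_delta by (metis half_gt_zero zero_less_one)
  show ?thesis
  proof (rule that[of "d/2"])
    fix a b :: complex assume "cmod a < d/2" "cmod b < d/2"
    then have "dist (a, b) (0, 0) < d"
      using norm_Pair_le[of a b] by (simp add: dist_norm)
    then show "cmod (quartic_slope \<gamma>1 \<gamma>2 \<gamma>3 a b - 1) < 1/2"
      using d(2) by (force simp: dist_norm)
  qed (use d in simp)
qed

lemma quartic_local_inverse:
  fixes \<gamma>1 \<gamma>2 \<gamma>3 :: complex and e :: real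
  assumes "e > 0"
  obtains r \<rho> \<psi> where "0 < r" "r \<le> e" "0 < \<rho>"
    "\<And>z. cmod z \<le> r \<Longrightarrow> cmod (quartic_deriv \<gamma>1 \<gamma>2 \<gamma>3 z) \<ge> 1/2"
    "\<And>z. cmod z \<le> r \<Longrightarrow> cmod z \<le> 2 * cmod (quartic \<gamma>1 \<gamma>2 \<gamma>3 z)"
    "\<And>w. w \<in> ball 0 \<rho> \<Longrightarrow> \<psi> w \<in> ball 0 r \<and> quartic \<gamma>1 \<gamma>2 \<gamma>3 (\<psi> w) = w"
    "\<And>z. z \<in> ball 0 r \<Longrightarrow> \<psi> (quartic \<gamma>1 \<gamma>2 \<gamma>3 z) = z"
    "\<And>w. w \<in> ball 0 \<rho> \<Longrightarrow>
        (\<psi> has_field_derivative inverse (quartic_deriv \<gamma>1 \<gamma>2 \<gamma>3 (\<psi> w))) (at w)"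
proof -
  let ?q = "quartic \<gamma>1 \<gamma>2 \<gamma>3" and ?q' = "quartic_deriv \<gamma>1 \<gamma>2 \<gamma>3"
  obtain r1 where r1: "r1 > 0"
    "\<And>a b. cmod a < r1 \<Longrightarrow> cmod b < r1 \<Longrightarrow> cmod (quartic_slope \<gamma>1 \<gamma>2 \<gamma>3 a b - 1) < 1/2"
    using quartic_slope_near_1 by blast
  define r where "r = min e (r1/2)"
  have r: "0 < r" "r \<le> e" "r < r1"
    using assms r1(1) by (auto simp: r_def)
  have slope: "cmod (quartic_slope \<gamma>1 \<gamma>2 \<gamma>3 a b) \<ge> 1/2" if "cmod a \<le> r" "cmod b \<le> r" for a b
  proof -
    have "cmod (quartic_slope \<gamma>1 \<gamma>2 \<gamma>3 a b - 1) < 1/2"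
      using r1(2) that r(3) by simp
    moreover have "1 - cmod (quartic_slope \<gamma>1 \<gamma>2 \<gamma>3 a b) \<le> cmod (quartic_slope \<gamma>1 \<gamma>2 \<gamma>3 a b - 1)"
      using norm_triangle_ineq2[of 1 "quartic_slope \<gamma>1 \<gamma>2 \<gamma>3 a b"] by (simp add: norm_minus_commute)
    ultimately show ?thesis
      by linarith
  qed
  have diff: "cmod (?q a - ?q b) \<ge> cmod (a - b) / 2" if "cmod a \<le> r" "cmod b \<le> r" for a b
  proof -
    have "cmod (a - b) * (1/2) \<le> cmod (a - b) * cmod (quartic_slope \<gamma>1 \<gamma>2 \<gamma>3 a b)"
      using slope[OF that] by (rule mult_left_mono) simp
    then show ?thesis
      by (simp add: quartic_diff norm_mult)
  qed
  have inj: "inj_on ?q (ball 0 r)"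
  proof (rule inj_onI)
    fix a b assume "a \<in> ball 0 r" "b \<in> ball 0 r" "?q a = ?q b"
    then show "a = b"
      using diff[of a b] by simp
  qed
  have hol: "?q holomorphic_on ball 0 r"
    unfolding quartic_def[abs_def] by (intro holomorphic_intros)
  obtain \<psi> where \<psi>: "\<psi> holomorphic_on (?q ` ball 0 r)"
    "\<And>z. z \<in> ball 0 r \<Longrightarrow> deriv ?q z * deriv \<psi> (?q z) = 1"
    "\<And>z. z \<in> ball 0 r \<Longrightarrow> \<psi> (?q z) = z"
    using holomorphic_has_inverse[OF hol open_ball inj] by blast
  have "open (?q ` ball 0 r)"
    by (rule open_mapping_thm3[OF hol open_ball inj])
  moreover have "0 \<in> ?q ` ball 0 r"
    using r by (auto simp: quartic_def intro!: image_eqI[of 0 _ 0])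
  ultimately obtain \<rho> where \<rho>: "\<rho> > 0" "ball 0 \<rho> \<subseteq> ?q ` ball 0 r"
    using open_contains_ball by blast
  show ?thesis
  proof (rule that[of r \<rho> \<psi>, OF r(1,2) \<rho>(1)])
    show "cmod (?q' z) \<ge> 1/2" if "cmod z \<le> r" for z
      using slope[OF that that] by (simp add: quartic_deriv_eq_slope)
    show "cmod z \<le> 2 * cmod (?q z)" if "cmod z \<le> r" for z
    proof -
      have q0: "?q 0 = 0"
        by (simp add: quartic_def)
      have "cmod (z - 0) / 2 \<le> cmod (?q z - ?q 0)"
        using that r(1) by (intro diff) auto
      then show ?thesis
        unfolding q0 diff_zero by linarith
    qed
    show "\<psi> w \<in> ball 0 r \<and> ?q (\<psi> w) = w" if w: "w \<in> ball 0 \<rho>" for w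
    proof -
      obtain z where "z \<in> ball 0 r" "w = ?q z"
        using \<rho>(2) w by blast
      then show ?thesis
        using \<psi>(3) by simp
    qed
    show "\<psi> (?q z) = z" if "z \<in> ball 0 r" for z
      using \<psi>(3) that .
    show "(\<psi> has_field_derivative inverse (?q' (\<psi> w))) (at w)" if w: "w \<in> ball 0 \<rho>" for w
    proof -
      obtain z where z: "z \<in> ball 0 r" "w = ?q z"
        using \<rho>(2) w by blast
      have "\<psi> field_differentiable (at w)"
        using holomorphic_on_imp_differentiable_at[OF \<psi>(1) \<open>open (?q ` ball 0 r)\<close>] z by auto
      then have "(\<psi> has_field_derivative deriv \<psi> w) (at w)"
        using DERIV_deriv_iff_field_differentiable by blast
      moreover have "?q' z * deriv \<psi> w = 1"
        using \<psi>(2)[OF z(1)] DERIV_imp_deriv[OF has_field_derivative_quartic] z(2) by simp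
      then have "deriv \<psi> w = inverse (?q' z)"
        by (metis inverse_unique mult.commute)
      moreover have "\<psi> w = z"
        using \<psi>(3) z by simp
      ultimately show ?thesis
        by simp
    qed
  qed
qed

section \<open>Cubic remainders\<close>

definition cubically_bounded_on :: "complex set \<Rightarrow> (complex \<Rightarrow> complex) \<Rightarrow> bool" where
  "cubically_bounded_on A f \<longleftrightarrow> (\<exists>M. \<forall>z\<in>A. cmod (f z) \<le> M * cmod z ^ 3)"

lemma cubically_bounded_onI: "(\<And>z. z \<in> A \<Longrightarrow> cmod (f z) \<le> M * cmod z ^ 3) \<Longrightarrow> cubically_bounded_on A f"
  unfolding cubically_bounded_on_def by blast

lemma cubically_bounded_on_add:
  assumes "cubically_bounded_on A f" "cubically_bounded_on A g"
  shows "cubically_bounded_on A (\<lambda>z. f z + g z)"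
proof -
  obtain M N where "\<forall>z\<in>A. cmod (f z) \<le> M * cmod z ^ 3" "\<forall>z\<in>A. cmod (g z) \<le> N * cmod z ^ 3"
    using assms unfolding cubically_bounded_on_def by blast
  then show ?thesis
    by (intro cubically_bounded_onI[of A _ "M + N"])
      (smt (verit, best) distrib_right norm_triangle_ineq)
qed

lemma cubically_bounded_on_mult_continuous:
  assumes "compact A" "continuous_on A g" "cubically_bounded_on A f"
  shows "cubically_bounded_on A (\<lambda>z. g z * f z)"
proof -
  obtain B where B: "\<forall>z\<in>A. cmod (g z) \<le> B"
    using compact_imp_bounded[OF compact_continuous_image[OF assms(2,1)]] by (auto simp: bounded_iff)
  obtain M where M: "\<forall>z\<in>A. cmod (f z) \<le> M * cmod z ^ 3"
    using assms(3) unfolding cubically_bounded_on_def by blast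
  show ?thesis
  proof (rule cubically_bounded_onI[of A _ "B * M"])
    fix z assume "z \<in> A"
    then show "cmod (g z * f z) \<le> B * M * cmod z ^ 3"
      using B M by (simp add: norm_mult mult.assoc mult_mono')
  qed
qed

lemma cubically_bounded_on_diff:
  "cubically_bounded_on A f \<Longrightarrow> cubically_bounded_on A g \<Longrightarrow> cubically_bounded_on A (\<lambda>z. f z - g z)"
  using cubically_bounded_on_add[of A f "\<lambda>z. - g z"] unfolding cubically_bounded_on_def by simp

lemma cubically_bounded_on_cong:
  "(\<And>z. z \<in> A \<Longrightarrow> f z = g z) \<Longrightarrow> cubically_bounded_on A f \<Longrightarrow> cubically_bounded_on A g"
  unfolding cubically_bounded_on_def by simp

lemma cubically_bounded_on_monomial:
  "i + j = 3 \<Longrightarrow> cubically_bounded_on A (\<lambda>z. z^i * cnj z ^ j)"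
  by (intro cubically_bounded_onI[of A _ 1]) (simp add: norm_mult norm_power flip: power_add)

lemma cubically_bounded_on_monomial_mult:
  "compact A \<Longrightarrow> continuous_on A g \<Longrightarrow> i + j = 3 \<Longrightarrow> cubically_bounded_on A (\<lambda>z. z^i * cnj z ^ j * g z)"
  using cubically_bounded_on_mult_continuous[OF _ _ cubically_bounded_on_monomial]
  by (simp add: mult.commute)

lemma local_cubic_bound_on_ball:
  fixes f :: "complex \<Rightarrow> complex"
  assumes "open S" "0 \<in> S" "\<delta> > 0" "\<And>z. z \<in> S \<Longrightarrow> cmod z < \<delta> \<Longrightarrow> cmod (f z) \<le> C * cmod z ^ 3"
  obtains \<epsilon> where "\<epsilon> > 0" "ball 0 \<epsilon> \<subseteq> S" "\<And>z. cmod z < \<epsilon> \<Longrightarrow> cmod (f z) \<le> max C 0 * cmod z ^ 3"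
proof -
  obtain e where e: "e > 0" "ball 0 e \<subseteq> S"
    using assms(1,2) open_contains_ball by blast
  show ?thesis
  proof (rule that[of "min e \<delta>"])
    show "ball 0 (min e \<delta>) \<subseteq> S"
      using e(2) by (auto simp: subset_eq)
    show "cmod (f z) \<le> max C 0 * cmod z ^ 3" if "cmod z < min e \<delta>" for z
    proof -
      have "z \<in> S"
        using e(2) that by auto
      then have "cmod (f z) \<le> C * cmod z ^ 3"
        using assms(4) that by simp
      also have "\<dots> \<le> max C 0 * cmod z ^ 3"
        by (intro mult_right_mono) auto
      finally show ?thesis .
    qed
  qed (use e(1) assms(3) in simp)
qed

text \<open>The \<open>\<gamma>\<close>-equations are exactly the vanishing of the coefficients of \<open>1, z, z\<^sup>2\<close>, and the
  definitions of \<open>\<nu>2, \<nu>3\<close> that of \<open>z cnj z, cnj z\<^sup>2\<close>, in the expansion of the numerator below;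
  the coefficient of \<open>cnj z\<close> vanishes identically.\<close>

lemma cubically_bounded_on_normal_form_numerator:
  fixes \<gamma>1 \<gamma>2 \<gamma>3 c0 c1 c2 c3 c4 c5 \<nu>2 \<nu>3 :: complex
  assumes "2 * \<gamma>1 + c0 = 0" "c2 + 2 * \<gamma>1 * c0 + 6 * \<gamma>2 = 0"
    "12 * \<gamma>3 + c3 + 2 * \<gamma>1 * c2 + 3 * \<gamma>2 * c0 = 0"
    "\<nu>2 = c5 - 2 * \<gamma>1 * c1" "\<nu>3 = c4 - c1 * cnj \<gamma>1"
  shows "cubically_bounded_on (cball 0 r) (\<lambda>z.
    jet2 c0 c1 c2 c3 c4 c5 z * quartic_deriv \<gamma>1 \<gamma>2 \<gamma>3 z + quartic_deriv2 \<gamma>1 \<gamma>2 \<gamma>3 z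
      - (c1 * (cnj z + cnj \<gamma>1 * (cnj z)^2) + \<nu>2 * (z * cnj z) + \<nu>3 * (cnj z)^2)
        * (quartic_deriv \<gamma>1 \<gamma>2 \<gamma>3 z)^2)"
proof -
  define A where "A z zb = (- 18*\<gamma>2^2 - 32*\<gamma>1*\<gamma>3 + 48*\<gamma>1^2*\<gamma>2 - 16*\<gamma>1^4 - 4*zb*\<gamma>3*c1 - 3*zb*\<gamma>2*c5 - 4*zb*\<gamma>1^2*c5 + 8*zb*\<gamma>1^3*c1 - 4*zb^2*\<gamma>3*c4 - 12*zb^2*\<gamma>1*\<gamma>2*c4 - 60*z*\<gamma>2*\<gamma>3 + 54*z*\<gamma>1*\<gamma>2^2 + 16*z*\<gamma>1^2*\<gamma>3 - 24*z*\<gamma>1^3*\<gamma>2 - 4*z*zb*\<gamma>3*c5 - 9*z*zb*\<gamma>2^2*c1 - 12*z*zb*\<gamma>1*\<gamma>2*c5 + 24*z*zb*\<gamma>1^2*\<gamma>2*c1 - 9*z*zb^2*\<gamma>2^2*c4 - 16*z*zb^2*\<gamma>1*\<gamma>3*c4 - 48*z^2*\<gamma>3^2 + 72*z^2*\<gamma>1*\<gamma>2*\<gamma>3 - 32*z^2*\<gamma>1^3*\<gamma>3 - 24*z^2*zb*\<gamma>2*\<gamma>3*c1 - 9*z^2*zb*\<gamma>2^2*c5 - 16*z^2*zb*\<gamma>1*\<gamma>3*c5 + 18*z^2*zb*\<gamma>1*\<gamma>2^2*c1 + 32*z^2*zb*\<gamma>1^2*\<gamma>3*c1 - 24*z^2*zb^2*\<gamma>2*\<gamma>3*c4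 - 16*z^3*zb*\<gamma>3^2*c1 - 24*z^3*zb*\<gamma>2*\<gamma>3*c5 + 48*z^3*zb*\<gamma>1*\<gamma>2*\<gamma>3*c1 - 16*z^3*zb^2*\<gamma>3^2*c4 - 16*z^4*zb*\<gamma>3^2*c5 + 32*z^4*zb*\<gamma>1*\<gamma>3^2*c1)" for z zb :: complex
  define B where "B zb = (- 3*\<gamma>2*c1 - 2*\<gamma>1*c5 + 4*\<gamma>1^2*c1 - 3*zb*\<gamma>2*c4 - 4*zb*\<gamma>1^2*c4)" for zb :: complex
  have c0: "c0 = - 2 * \<gamma>1" and c2: "c2 = - 2 * \<gamma>1 * c0 - 6 * \<gamma>2"
    and c3: "c3 = - 12 * \<gamma>3 - 2 * \<gamma>1 * c2 - 3 * \<gamma>2 * c0"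
    using assms(1-3) by (simp_all add: algebra_simps eq_neg_iff_add_eq_0)
  have "(c0 + c1 * zb + c2 * z + c3 * z^2 + c4 * zb^2 + c5 * z * zb) * (1 + 2 * \<gamma>1 * z + 3 * \<gamma>2 * z^2 + 4 * \<gamma>3 * z^3)
      + (2 * \<gamma>1 + 6 * \<gamma>2 * z + 12 * \<gamma>3 * z^2)
      - (c1 * (zb + cnj \<gamma>1 * zb^2) + \<nu>2 * (z * zb) + \<nu>3 * zb^2) * (1 + 2 * \<gamma>1 * z + 3 * \<gamma>2 * z^2 + 4 * \<gamma>3 * z^3)^2
    = z^3 * zb^0 * A z zb + z^2 * zb^1 * B zb + z^1 * zb^2 * (- 2 * \<gamma>1 * c4)" for z zb
    unfolding A_def B_def c3 unfolding c2 unfolding c0 assms(4,5) by algebra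
  note ident = this
  have eq: "jet2 c0 c1 c2 c3 c4 c5 z * quartic_deriv \<gamma>1 \<gamma>2 \<gamma>3 z + quartic_deriv2 \<gamma>1 \<gamma>2 \<gamma>3 z
      - (c1 * (cnj z + cnj \<gamma>1 * (cnj z)^2) + \<nu>2 * (z * cnj z) + \<nu>3 * (cnj z)^2) * (quartic_deriv \<gamma>1 \<gamma>2 \<gamma>3 z)^2
    = z^3 * cnj z ^ 0 * A z (cnj z) + z^2 * cnj z ^ 1 * B (cnj z) + z^1 * cnj z ^ 2 * (- 2 * \<gamma>1 * c4)" for z
    unfolding jet2_def quartic_deriv_def quartic_deriv2_def by (rule ident)
  show ?thesis
    unfolding eq A_def B_def
    by (intro cubically_bounded_on_add cubically_bounded_on_monomial_mult compact_cball continuous_intros) simp_all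
qed

lemma cubically_bounded_on_nonlinearity_quartic:
  fixes \<gamma>1 \<gamma>2 \<gamma>3 c1 \<nu>2 \<nu>3 :: complex
  shows "cubically_bounded_on (cball 0 r) (\<lambda>z.
    c1 * cnj (quartic \<gamma>1 \<gamma>2 \<gamma>3 z) + \<nu>2 * (cmod (quartic \<gamma>1 \<gamma>2 \<gamma>3 z))^2
      + \<nu>3 * (cnj (quartic \<gamma>1 \<gamma>2 \<gamma>3 z))^2
    - (c1 * (cnj z + cnj \<gamma>1 * (cnj z)^2) + \<nu>2 * (z * cnj z) + \<nu>3 * (cnj z)^2))"
proof -
  define P2 where "P2 z zb = (\<nu>2*(\<gamma>1 + \<gamma>2*z + \<gamma>3*z^2) + \<nu>2*zb*(\<gamma>1 + \<gamma>2*z + \<gamma>3*z^2)*(cnj \<gamma>1 + cnj \<gamma>2*zb + cnj \<gamma>3*zb^2))" for z zb :: complex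
  define P1 where "P1 zb = (\<nu>2*(cnj \<gamma>1 + cnj \<gamma>2*zb + cnj \<gamma>3*zb^2))" for zb :: complex
  define P0 where "P0 zb = (c1*(cnj \<gamma>2 + cnj \<gamma>3*zb) + \<nu>3*(2*(cnj \<gamma>1 + cnj \<gamma>2*zb + cnj \<gamma>3*zb^2) + zb*(cnj \<gamma>1 + cnj \<gamma>2*zb + cnj \<gamma>3*zb^2)^2))" for zb :: complex
  have ident: "c1 * (zb + cnj \<gamma>1 * zb^2 + cnj \<gamma>2 * zb^3 + cnj \<gamma>3 * zb^4)
      + \<nu>2 * ((z + \<gamma>1 * z^2 + \<gamma>2 * z^3 + \<gamma>3 * z^4) * (zb + cnj \<gamma>1 * zb^2 + cnj \<gamma>2 * zb^3 + cnj \<gamma>3 * zb^4))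
      + \<nu>3 * (zb + cnj \<gamma>1 * zb^2 + cnj \<gamma>2 * zb^3 + cnj \<gamma>3 * zb^4)^2
      - (c1 * (zb + cnj \<gamma>1 * zb^2) + \<nu>2 * (z * zb) + \<nu>3 * zb^2)
    = z^2 * zb^1 * P2 z zb + z^1 * zb^2 * P1 zb + z^0 * zb^3 * P0 zb" for z zb
    unfolding P2_def P1_def P0_def by algebra
  have cnj_q: "cnj (quartic \<gamma>1 \<gamma>2 \<gamma>3 z) = cnj z + cnj \<gamma>1 * (cnj z)^2 + cnj \<gamma>2 * (cnj z)^3 + cnj \<gamma>3 * (cnj z)^4"
    for z
    by (simp add: quartic_def)
  have eq: "c1 * cnj (quartic \<gamma>1 \<gamma>2 \<gamma>3 z) + \<nu>2 * (cmod (quartic \<gamma>1 \<gamma>2 \<gamma>3 z))^2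
      + \<nu>3 * (cnj (quartic \<gamma>1 \<gamma>2 \<gamma>3 z))^2
    - (c1 * (cnj z + cnj \<gamma>1 * (cnj z)^2) + \<nu>2 * (z * cnj z) + \<nu>3 * (cnj z)^2)
    = z^2 * cnj z ^ 1 * P2 z (cnj z) + z^1 * cnj z ^ 2 * P1 (cnj z) + z^0 * cnj z ^ 3 * P0 (cnj z)" for z
    unfolding complex_norm_square cnj_q unfolding quartic_def by (rule ident)
  show ?thesis
    unfolding eq P2_def P1_def P0_def
    by (intro cubically_bounded_on_add cubically_bounded_on_monomial_mult compact_cball continuous_intros) simp_all
qed

lemma cubically_bounded_on_normal_form_remainder:
  fixes G :: "complex \<Rightarrow> complex" and \<gamma>1 \<gamma>2 \<gamma>3 c0 c1 c2 c3 c4 c5 \<nu>2 \<nu>3 :: complex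
  assumes "2 * \<gamma>1 + c0 = 0" "c2 + 2 * \<gamma>1 * c0 + 6 * \<gamma>2 = 0"
    "12 * \<gamma>3 + c3 + 2 * \<gamma>1 * c2 + 3 * \<gamma>2 * c0 = 0"
    "\<nu>2 = c5 - 2 * \<gamma>1 * c1" "\<nu>3 = c4 - c1 * cnj \<gamma>1"
    "\<And>z. cmod z \<le> r \<Longrightarrow> quartic_deriv \<gamma>1 \<gamma>2 \<gamma>3 z \<noteq> 0"
    "\<And>z. cmod z \<le> r \<Longrightarrow> cmod (G z - jet2 c0 c1 c2 c3 c4 c5 z) \<le> C * cmod z ^ 3"
  shows "cubically_bounded_on (cball 0 r) (\<lambda>z.
    (G z * quartic_deriv \<gamma>1 \<gamma>2 \<gamma>3 z + quartic_deriv2 \<gamma>1 \<gamma>2 \<gamma>3 z) / (quartic_deriv \<gamma>1 \<gamma>2 \<gamma>3 z)^2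
      - (c1 * cnj (quartic \<gamma>1 \<gamma>2 \<gamma>3 z) + \<nu>2 * (cmod (quartic \<gamma>1 \<gamma>2 \<gamma>3 z))^2
         + \<nu>3 * (cnj (quartic \<gamma>1 \<gamma>2 \<gamma>3 z))^2))"
proof -
  let ?d = "quartic_deriv \<gamma>1 \<gamma>2 \<gamma>3" and ?T = "jet2 c0 c1 c2 c3 c4 c5"
  let ?Pt = "\<lambda>z. c1 * (cnj z + cnj \<gamma>1 * (cnj z)^2) + \<nu>2 * (z * cnj z) + \<nu>3 * (cnj z)^2"
  have cont: "continuous_on (cball 0 r) (\<lambda>z. inverse (?d z) ^ n)" for n
    using assms(6) unfolding quartic_deriv_def by (intro continuous_intros) auto
  have "cubically_bounded_on (cball 0 r) (\<lambda>z. G z - ?T z)"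
    using assms(7) by (intro cubically_bounded_onI) auto
  from cubically_bounded_on_diff[OF cubically_bounded_on_add[OF
      cubically_bounded_on_mult_continuous[OF compact_cball cont this]
      cubically_bounded_on_mult_continuous[OF compact_cball cont
        cubically_bounded_on_normal_form_numerator[OF assms(1-5)]]]
      cubically_bounded_on_nonlinearity_quartic]
  have "cubically_bounded_on (cball 0 r) (\<lambda>z. inverse (?d z) ^ 1 * (G z - ?T z)
      + inverse (?d z)^2 * (?T z * ?d z + quartic_deriv2 \<gamma>1 \<gamma>2 \<gamma>3 z - ?Pt z * (?d z)^2)
      - (c1 * cnj (quartic \<gamma>1 \<gamma>2 \<gamma>3 z) + \<nu>2 * (cmod (quartic \<gamma>1 \<gamma>2 \<gamma>3 z))^2
         + \<nu>3 * (cnj (quartic \<gamma>1 \<gamma>2 \<gamma>3 z))^2 - ?Pt z))" .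
  moreover have eq: "inverse (?d z) ^ 1 * (G z - ?T z)
      + inverse (?d z)^2 * (?T z * ?d z + quartic_deriv2 \<gamma>1 \<gamma>2 \<gamma>3 z - ?Pt z * (?d z)^2)
      = (G z * ?d z + quartic_deriv2 \<gamma>1 \<gamma>2 \<gamma>3 z) / (?d z)^2 - ?Pt z" if "z \<in> cball 0 r" for z
    using assms(6)[of z] that by (simp add: field_simps power2_eq_square)
  ultimately show ?thesis
    by (elim cubically_bounded_on_cong[rotated]) (simp only: eq, simp)
qed

section \<open>Normal form of the equation\<close>

lemma Ck_on_quartic_deriv: "open S \<Longrightarrow> Ck_on k S (quartic_deriv \<gamma>1 \<gamma>2 \<gamma>3)"
  unfolding quartic_deriv_def[abs_def]
  by (intro Ck_on_add Ck_on_mult Ck_on_const Ck_on_power Ck_on_ident)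

lemma Ck_on_quartic_deriv2: "open S \<Longrightarrow> Ck_on k S (quartic_deriv2 \<gamma>1 \<gamma>2 \<gamma>3)"
  unfolding quartic_deriv2_def[abs_def]
  by (intro Ck_on_add Ck_on_mult Ck_on_const Ck_on_power Ck_on_ident)

lemma smooth_on_normal_form_remainder:
  fixes h :: "complex \<Rightarrow> real" and \<psi> :: "complex \<Rightarrow> complex" and c1 \<nu>2 \<nu>3 :: complex
  assumes "open S" "\<And>z. z \<in> S \<Longrightarrow> h z > 0" "smooth_on S h" "ball 0 r \<subseteq> S"
    "\<And>z. z \<in> ball 0 r \<Longrightarrow> quartic_deriv \<gamma>1 \<gamma>2 \<gamma>3 z \<noteq> 0"
    "\<And>w. w \<in> ball 0 \<rho> \<Longrightarrow> \<psi> w \<in> ball 0 r"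
    "\<And>w. w \<in> ball 0 \<rho> \<Longrightarrow> (\<psi> has_field_derivative inverse (quartic_deriv \<gamma>1 \<gamma>2 \<gamma>3 (\<psi> w))) (at w)"
  shows "smooth_on (ball 0 \<rho>) (\<lambda>w.
    (christoffel h (\<psi> w) * quartic_deriv \<gamma>1 \<gamma>2 \<gamma>3 (\<psi> w) + quartic_deriv2 \<gamma>1 \<gamma>2 \<gamma>3 (\<psi> w))
      / (quartic_deriv \<gamma>1 \<gamma>2 \<gamma>3 (\<psi> w))^2
    - (c1 * cnj w + \<nu>2 * (cmod w)^2 + \<nu>3 * (cnj w)^2))"
  unfolding smooth_on_def
proof
  fix k
  let ?d = "quartic_deriv \<gamma>1 \<gamma>2 \<gamma>3" and ?dd = "quartic_deriv2 \<gamma>1 \<gamma>2 \<gamma>3"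
  have inv_d: "Ck_on k (ball 0 r) (\<lambda>z. inverse (?d z))" for k
    using assms(5) by (intro Ck_on_inverse Ck_on_quartic_deriv open_ball)
  have "Ck_on k (ball 0 r) (christoffel h)"
    using Ck_on_christoffel[OF assms(1,2) smooth_onD[OF assms(3)]] assms(4) Ck_on_subset by blast
  then have E: "Ck_on k (ball 0 r) (\<lambda>z. (christoffel h z * ?d z + ?dd z) * inverse (?d z) ^ 2)"
    using inv_d by (intro Ck_on_mult Ck_on_add Ck_on_power Ck_on_quartic_deriv Ck_on_quartic_deriv2 open_ball)
  have "Ck_on k (ball 0 \<rho>) \<psi>"
    using assms(6,7) by (intro Ck_on_deriv_comp[OF open_ball open_ball _ inv_d]) auto
  then have "Ck_on k (ball 0 \<rho>) (\<lambda>w. (christoffel h (\<psi> w) * ?d (\<psi> w) + ?dd (\<psi> w)) * inverse (?d (\<psi> w)) ^ 2)"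
    using assms(6) by (intro Ck_on_compose[OF open_ball open_ball _ E]) auto
  moreover have "Ck_on k (ball 0 \<rho>) (\<lambda>w. c1 * cnj w + \<nu>2 * (w * cnj w) + \<nu>3 * (cnj w)^2)"
    by (intro Ck_on_add Ck_on_mult Ck_on_const Ck_on_power Ck_on_ident Ck_on_cnj open_ball)
  ultimately show "Ck_on k (ball 0 \<rho>) (\<lambda>w.
    (christoffel h (\<psi> w) * ?d (\<psi> w) + ?dd (\<psi> w)) / (?d (\<psi> w))^2
    - (c1 * cnj w + \<nu>2 * (cmod w)^2 + \<nu>3 * (cnj w)^2))"
    unfolding complex_norm_square divide_inverse power_inverse by (rule Ck_on_diff[OF open_ball])
qed

lemma quartic_normal_form:
  fixes h :: "complex \<Rightarrow> real" and \<gamma>1 \<gamma>2 \<gamma>3 c0 c1 c2 c3 c4 c5 \<nu>2 \<nu>3 :: complex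
  assumes "open S" "\<And>z. z \<in> S \<Longrightarrow> h z > 0" "smooth_on S h" "\<epsilon> > 0" "ball 0 \<epsilon> \<subseteq> S"
    "\<And>z. cmod z < \<epsilon> \<Longrightarrow> cmod (christoffel h z - jet2 c0 c1 c2 c3 c4 c5 z) \<le> C * cmod z ^ 3"
    "2 * \<gamma>1 + c0 = 0" "c2 + 2 * \<gamma>1 * c0 + 6 * \<gamma>2 = 0"
    "12 * \<gamma>3 + c3 + 2 * \<gamma>1 * c2 + 3 * \<gamma>2 * c0 = 0"
    "\<nu>2 = c5 - 2 * \<gamma>1 * c1" "\<nu>3 = c4 - c1 * cnj \<gamma>1"
  obtains r \<rho> R where "r > 0" "\<rho> > 0" "smooth_on (ball 0 \<rho>) R"
    "\<exists>M. \<forall>w\<in>ball 0 \<rho>. cmod (R w) \<le> M * cmod w ^ 3"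
    "\<forall>z. cmod z < r \<longrightarrow> cmod (quartic \<gamma>1 \<gamma>2 \<gamma>3 z) < \<rho> \<and>
       christoffel h z * quartic_deriv \<gamma>1 \<gamma>2 \<gamma>3 z + quartic_deriv2 \<gamma>1 \<gamma>2 \<gamma>3 z
       = (c1 * cnj (quartic \<gamma>1 \<gamma>2 \<gamma>3 z) + \<nu>2 * (cmod (quartic \<gamma>1 \<gamma>2 \<gamma>3 z))^2
          + \<nu>3 * (cnj (quartic \<gamma>1 \<gamma>2 \<gamma>3 z))^2 + R (quartic \<gamma>1 \<gamma>2 \<gamma>3 z))
         * (quartic_deriv \<gamma>1 \<gamma>2 \<gamma>3 z)^2"
proof -
  let ?q = "quartic \<gamma>1 \<gamma>2 \<gamma>3" and ?d = "quartic_deriv \<gamma>1 \<gamma>2 \<gamma>3" and ?dd = "quartic_deriv2 \<gamma>1 \<gamma>2 \<gamma>3"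
  let ?P = "\<lambda>w. c1 * cnj w + \<nu>2 * (cmod w)^2 + \<nu>3 * (cnj w)^2"
  obtain r0 \<rho> \<psi> where r0: "0 < r0" "r0 \<le> \<epsilon>/2" "0 < \<rho>"
    and d_ge: "\<And>z. cmod z \<le> r0 \<Longrightarrow> cmod (?d z) \<ge> 1/2"
    and q_ge: "\<And>z. cmod z \<le> r0 \<Longrightarrow> cmod z \<le> 2 * cmod (?q z)"
    and \<psi>: "\<And>w. w \<in> ball 0 \<rho> \<Longrightarrow> \<psi> w \<in> ball 0 r0 \<and> ?q (\<psi> w) = w"
      "\<And>z. z \<in> ball 0 r0 \<Longrightarrow> \<psi> (?q z) = z"
      "\<And>w. w \<in> ball 0 \<rho> \<Longrightarrow> (\<psi> has_field_derivative inverse (?d (\<psi> w))) (at w)"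
    using quartic_local_inverse[of "\<epsilon>/2" \<gamma>1 \<gamma>2 \<gamma>3, OF half_gt_zero[OF assms(4)]] by blast
  have d_nz: "?d z \<noteq> 0" if "cmod z \<le> r0" for z
    using d_ge[OF that] by auto
  have small: "cmod z < \<epsilon>" if "cmod z \<le> r0" for z
    using that r0 assms(4) by simp
  define R where "R w = (christoffel h (\<psi> w) * ?d (\<psi> w) + ?dd (\<psi> w)) / (?d (\<psi> w))^2 - ?P w" for w
  have R_q: "R (?q z) = (christoffel h z * ?d z + ?dd z) / (?d z)^2 - ?P (?q z)" if "cmod z < r0" for z
    using \<psi>(2)[of z] that by (simp add: R_def)
  have "ball 0 r0 \<subseteq> S"
    using assms(5) r0(2) assms(4) by (auto simp: subset_eq)
  then have "smooth_on (ball 0 \<rho>) R"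
    unfolding R_def[abs_def] using d_nz \<psi>
    by (intro smooth_on_normal_form_remainder[OF assms(1-3)]) auto
  moreover have "\<exists>M. \<forall>w\<in>ball 0 \<rho>. cmod (R w) \<le> M * cmod w ^ 3"
  proof -
    obtain M where M: "\<And>z. cmod z \<le> r0 \<Longrightarrow>
        cmod ((christoffel h z * ?d z + ?dd z) / (?d z)^2 - ?P (?q z)) \<le> M * cmod z ^ 3"
      using cubically_bounded_on_normal_form_remainder[where G="christoffel h" and C=C, OF assms(7-11) d_nz]
        assms(6) small unfolding cubically_bounded_on_def by fastforce
    have "cmod (R w) \<le> (8 * max M 0) * cmod w ^ 3" if w: "w \<in> ball 0 \<rho>" for w
    proof -
      obtain z where z: "cmod z < r0" "w = ?q z"
        using \<psi>(1)[OF w] by (metis mem_ball_0)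
      then have "cmod (R w) \<le> M * cmod z ^ 3"
        using M[of z] R_q[of z] by simp
      also have "\<dots> \<le> max M 0 * cmod z ^ 3"
        by (intro mult_right_mono) auto
      also have "\<dots> \<le> max M 0 * (2 * cmod w) ^ 3"
        using q_ge[of z] z by (intro mult_left_mono power_mono) auto
      finally show ?thesis
        by (simp add: power_mult_distrib)
    qed
    then show ?thesis
      by blast
  qed
  moreover obtain r1 where r1: "r1 > 0" "\<And>z. cmod z < r1 \<Longrightarrow> cmod (?q z) < \<rho>"
  proof -
    have "isCont ?q 0"
      unfolding quartic_def[abs_def] by (intro continuous_intros)
    then show ?thesis
      using r0(3) that unfolding continuous_at_eps_delta by (force simp: quartic_def dist_norm)
  qed
  moreover have "christoffel h z * ?d z + ?dd z = (?P (?q z) + R (?q z)) * (?d z)^2" if "cmod z < r0" for z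
    using R_q[OF that] d_nz[of z] that by (simp add: field_simps)
  ultimately show ?thesis
    using that[of "min r0 r1" \<rho> R] r0 by force
qed

lemma holomorphic_change_of_coordinates:
  fixes \<phi> \<phi>' \<phi>'' G N :: "complex \<Rightarrow> complex"
  assumes \<phi>: "\<And>u. (\<phi> has_field_derivative \<phi>' u) (at u)"
    and \<phi>': "\<And>u. (\<phi>' has_field_derivative \<phi>'' u) (at u)"
    and N: "\<forall>u. cmod u < r \<longrightarrow> cmod (\<phi> u) < \<rho> \<and> G u * \<phi>' u + \<phi>'' u = N (\<phi> u) * (\<phi>' u)^2"
  shows "\<forall>(U :: (real \<times> real) set) (z :: real \<Rightarrow> real \<Rightarrow> complex) zt zx zxx.
    open U \<and>
    (\<forall>(t, x)\<in>U. cmod (z t x) < r \<and>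
       ((\<lambda>s. z s x) has_vector_derivative zt t x) (at t) \<and>
       ((\<lambda>y. z t y) has_vector_derivative zx t x) (at x) \<and>
       ((\<lambda>y. zx t y) has_vector_derivative zxx t x) (at x) \<and>
       \<i> * zt t x + zxx t x = G (z t x) * (zx t x)^2)
    \<longrightarrow>
    (\<exists>wt wx wxx :: real \<Rightarrow> real \<Rightarrow> complex.
       \<forall>(t, x)\<in>U. cmod (\<phi> (z t x)) < \<rho> \<and>
         ((\<lambda>s. \<phi> (z s x)) has_vector_derivative wt t x) (at t) \<and>
         ((\<lambda>y. \<phi> (z t y)) has_vector_derivative wx t x) (at x) \<and>
         ((\<lambda>y. wx t y) has_vector_derivative wxx t x) (at x) \<and>
         \<i> * wt t x + wxx t x = N (\<phi> (z t x)) * (wx t x)^2)"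
proof (intro allI impI)
  fix U :: "(real \<times> real) set" and z :: "real \<Rightarrow> real \<Rightarrow> complex" and zt zx zxx
  assume "open U \<and> (\<forall>(t, x)\<in>U. cmod (z t x) < r \<and>
       ((\<lambda>s. z s x) has_vector_derivative zt t x) (at t) \<and>
       ((\<lambda>y. z t y) has_vector_derivative zx t x) (at x) \<and>
       ((\<lambda>y. zx t y) has_vector_derivative zxx t x) (at x) \<and>
       \<i> * zt t x + zxx t x = G (z t x) * (zx t x)^2)"
  then have sol: "\<And>t x. (t, x) \<in> U \<Longrightarrow> cmod (z t x) < r \<and>
       ((\<lambda>s. z s x) has_vector_derivative zt t x) (at t) \<and>
       ((\<lambda>y. z t y) has_vector_derivative zx t x) (at x) \<and>
       ((\<lambda>y. zx t y) has_vector_derivative zxx t x) (at x) \<and>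
       \<i> * zt t x + zxx t x = G (z t x) * (zx t x)^2"
    by blast
  show "\<exists>wt wx wxx :: real \<Rightarrow> real \<Rightarrow> complex.
       \<forall>(t, x)\<in>U. cmod (\<phi> (z t x)) < \<rho> \<and>
         ((\<lambda>s. \<phi> (z s x)) has_vector_derivative wt t x) (at t) \<and>
         ((\<lambda>y. \<phi> (z t y)) has_vector_derivative wx t x) (at x) \<and>
         ((\<lambda>y. wx t y) has_vector_derivative wxx t x) (at x) \<and>
         \<i> * wt t x + wxx t x = N (\<phi> (z t x)) * (wx t x)^2"
  proof (intro exI ballI, clarify)
    fix t x assume "(t, x) \<in> U"
    have zr: "cmod (z t x) < r"
      and Dt: "((\<lambda>s. z s x) has_vector_derivative zt t x) (at t)"
      and Dx: "((\<lambda>y. z t y) has_vector_derivative zx t x) (at x)"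
      and Dxx: "((\<lambda>y. zx t y) has_vector_derivative zxx t x) (at x)"
      and eq: "\<i> * zt t x + zxx t x = G (z t x) * (zx t x)^2"
      using sol[OF \<open>(t, x) \<in> U\<close>] by blast+
    have "((\<lambda>s. \<phi> (z s x)) has_vector_derivative \<phi>' (z t x) * zt t x) (at t)"
      using field_vector_diff_chain_at[OF Dt \<phi>] by (simp add: o_def mult.commute)
    moreover have "((\<lambda>y. \<phi> (z t y)) has_vector_derivative \<phi>' (z t x) * zx t x) (at x)"
      using field_vector_diff_chain_at[OF Dx \<phi>] by (simp add: o_def mult.commute)
    moreover have "((\<lambda>y. \<phi>' (z t y) * zx t y) has_vector_derivative
        \<phi>'' (z t x) * (zx t x)^2 + \<phi>' (z t x) * zxx t x) (at x)"
      using has_vector_derivative_mult[OF field_vector_diff_chain_at[OF Dx \<phi>'] Dxx]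
      by (simp add: o_def algebra_simps power2_eq_square)
    moreover have "\<i> * (\<phi>' (z t x) * zt t x) + (\<phi>'' (z t x) * (zx t x)^2 + \<phi>' (z t x) * zxx t x)
        = N (\<phi> (z t x)) * (\<phi>' (z t x) * zx t x)^2"
    proof -
      have "\<i> * (\<phi>' (z t x) * zt t x) + (\<phi>'' (z t x) * (zx t x)^2 + \<phi>' (z t x) * zxx t x)
          = \<phi>' (z t x) * (\<i> * zt t x + zxx t x) + \<phi>'' (z t x) * (zx t x)^2"
        by (simp add: algebra_simps)
      also have "\<dots> = (G (z t x) * \<phi>' (z t x) + \<phi>'' (z t x)) * (zx t x)^2"
        unfolding eq by (simp add: algebra_simps)
      also have "\<dots> = N (\<phi> (z t x)) * (\<phi>' (z t x) * zx t x)^2"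
        using N[rule_format, OF zr] by (simp add: power_mult_distrib)
      finally show ?thesis .
    qed
    ultimately show "cmod (\<phi> (z t x)) < \<rho> \<and>
         ((\<lambda>s. \<phi> (z s x)) has_vector_derivative (\<lambda>t x. \<phi>' (z t x) * zt t x) t x) (at t) \<and>
         ((\<lambda>y. \<phi> (z t y)) has_vector_derivative (\<lambda>t x. \<phi>' (z t x) * zx t x) t x) (at x) \<and>
         ((\<lambda>y. (\<lambda>t x. \<phi>' (z t x) * zx t x) t y) has_vector_derivative
            (\<lambda>t x. \<phi>'' (z t x) * (zx t x)^2 + \<phi>' (z t x) * zxx t x) t x) (at x) \<and>
         \<i> * (\<lambda>t x. \<phi>' (z t x) * zt t x) t x + (\<lambda>t x. \<phi>'' (z t x) * (zx t x)^2 + \<phi>' (z t x) * zxx t x) t x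
           = N (\<phi> (z t x)) * ((\<lambda>t x. \<phi>' (z t x) * zx t x) t x)^2"
      using N[rule_format, OF zr] by simp
  qed
qed

theorem lemma3p1:
  fixes h :: "complex \<Rightarrow> real" and S :: "complex set"
    and \<Gamma> \<phi> :: "complex \<Rightarrow> complex"
    and c0 c1 c2 c3 c4 c5 \<gamma>1 \<gamma>2 \<gamma>3 \<nu>2 \<nu>3 :: complex
  assumes S: "open S" "0 \<in> S"
    and h_pos: "\<forall>z\<in>S. h z > 0"
    and h_smooth: "smooth_on S h"
    and Gamma_def: "\<Gamma> = (\<lambda>z. - wirt_z (\<lambda>u. complex_of_real (h u)) z / complex_of_real (h z))"
    and expansion: "\<exists>C \<delta>. \<delta> > 0 \<and> (\<forall>z\<in>S. cmod z < \<delta> \<longrightarrow>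
        cmod (\<Gamma> z - (c0 + c1 * cnj z + c2 * z + c3 * z^2 + c4 * (cnj z)^2 + c5 * z * cnj z))
          \<le> C * cmod z ^ 3)"
    and g1: "2 * \<gamma>1 + c0 = 0"
    and g2: "c2 + 2 * \<gamma>1 * c0 + 6 * \<gamma>2 = 0"
    and g3: "12 * \<gamma>3 + c3 + 2 * \<gamma>1 * c2 + 3 * \<gamma>2 * c0 = 0"
    and phi_def: "\<phi> = (\<lambda>z. z + \<gamma>1 * z^2 + \<gamma>2 * z^3 + \<gamma>3 * z^4)"
    and nu2_def: "\<nu>2 = c5 - 2 * \<gamma>1 * c1"
    and nu3_def: "\<nu>3 = c4 - c1 * cnj \<gamma>1"
  shows "c1 \<in> \<real> \<and> \<nu>2 = 2 * cnj \<nu>3 \<and>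
    (\<exists>r>0. \<exists>\<rho>>0. \<exists>R :: complex \<Rightarrow> complex.
       smooth_on (ball 0 \<rho>) R \<and>
       (\<exists>C. \<forall>w\<in>ball 0 \<rho>. cmod (R w) \<le> C * cmod w ^ 3) \<and>
       (\<forall>(U :: (real \<times> real) set) (z :: real \<Rightarrow> real \<Rightarrow> complex) zt zx zxx.
          open U \<and>
          (\<forall>(t, x)\<in>U. cmod (z t x) < r \<and>
             ((\<lambda>s. z s x) has_vector_derivative zt t x) (at t) \<and>
             ((\<lambda>y. z t y) has_vector_derivative zx t x) (at x) \<and>
             ((\<lambda>y. zx t y) has_vector_derivative zxx t x) (at x) \<and>
             \<i> * zt t x + zxx t x = \<Gamma> (z t x) * (zx t x)^2)
          \<longrightarrow>
          (\<exists>wt wx wxx :: real \<Rightarrow> real \<Rightarrow> complex.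
             \<forall>(t, x)\<in>U. cmod (\<phi> (z t x)) < \<rho> \<and>
               ((\<lambda>s. \<phi> (z s x)) has_vector_derivative wt t x) (at t) \<and>
               ((\<lambda>y. \<phi> (z t y)) has_vector_derivative wx t x) (at x) \<and>
               ((\<lambda>y. wx t y) has_vector_derivative wxx t x) (at x) \<and>
               \<i> * wt t x + wxx t x =
                 (c1 * cnj (\<phi> (z t x)) + \<nu>2 * (cmod (\<phi> (z t x)))^2
                  + \<nu>3 * (cnj (\<phi> (z t x)))^2 + R (\<phi> (z t x))) * (wx t x)^2)))"
proof -
  have \<Gamma>: "\<Gamma> = christoffel h"
    using Gamma_def by (simp add: fun_eq_iff christoffel_def)
  have \<phi>: "\<phi> = quartic \<gamma>1 \<gamma>2 \<gamma>3"
    using phi_def by (simp add: fun_eq_iff quartic_def)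
  obtain C \<delta> where "\<delta> > 0" "\<And>z. z \<in> S \<Longrightarrow> cmod z < \<delta> \<Longrightarrow>
      cmod (christoffel h z - jet2 c0 c1 c2 c3 c4 c5 z) \<le> C * cmod z ^ 3"
    using expansion unfolding \<Gamma> jet2_def by blast
  from local_cubic_bound_on_ball[OF S this] obtain \<epsilon> where \<epsilon>: "\<epsilon> > 0" "ball 0 \<epsilon> \<subseteq> S"
    and jet: "\<And>z. cmod z < \<epsilon> \<Longrightarrow> cmod (christoffel h z - jet2 c0 c1 c2 c3 c4 c5 z) \<le> max C 0 * cmod z ^ 3"
    by blast
  have "Im c1 = 0" "c5 = 2 * cnj c4"
    using h_pos \<epsilon>(2) jet smooth_on_imp_differentiable_at[OF S(1) h_smooth]
    by (intro christoffel_jet2_coefficients[OF \<epsilon>(1) max.cobounded2]; force)+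
  then have "c1 \<in> \<real>" "\<nu>2 = 2 * cnj \<nu>3"
    unfolding nu2_def nu3_def by (simp_all add: complex_is_Real_iff complex_eq_iff)
  moreover obtain r \<rho> R where "r > 0" "\<rho> > 0" "smooth_on (ball 0 \<rho>) R"
    "\<exists>M. \<forall>w\<in>ball 0 \<rho>. cmod (R w) \<le> M * cmod w ^ 3"
    and nf: "\<forall>z. cmod z < r \<longrightarrow> cmod (quartic \<gamma>1 \<gamma>2 \<gamma>3 z) < \<rho> \<and>
       christoffel h z * quartic_deriv \<gamma>1 \<gamma>2 \<gamma>3 z + quartic_deriv2 \<gamma>1 \<gamma>2 \<gamma>3 z
       = (c1 * cnj (quartic \<gamma>1 \<gamma>2 \<gamma>3 z) + \<nu>2 * (cmod (quartic \<gamma>1 \<gamma>2 \<gamma>3 z))^2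
          + \<nu>3 * (cnj (quartic \<gamma>1 \<gamma>2 \<gamma>3 z))^2 + R (quartic \<gamma>1 \<gamma>2 \<gamma>3 z))
         * (quartic_deriv \<gamma>1 \<gamma>2 \<gamma>3 z)^2"
    by (rule quartic_normal_form[OF S(1) h_pos[rule_format] h_smooth \<epsilon> jet g1 g2 g3 nu2_def nu3_def],
        assumption, assumption, rule that)
  moreover note holomorphic_change_of_coordinates[where r=r and \<rho>=\<rho> and G="christoffel h"
      and N="\<lambda>w. c1 * cnj w + \<nu>2 * (cmod w)^2 + \<nu>3 * (cnj w)^2 + R w",
      OF has_field_derivative_quartic has_field_derivative_quartic_deriv nf]
  ultimately show ?thesis
    unfolding \<Gamma> \<phi> by blast
qed

end
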